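(* Let $R$ be a semistandard cylindric tableau and $S$ a set of boxes satisfying the input conditions of full multi-insertion, and perform $\operatorname{FullMulti}(R,S)$. Then for every row $r$, the list of entries removed from row $r$ (either removed from boxes of $S$ in the initial phase, or displaced by a bump), in the order in which they were removed, is weakly increasing.
   Context: Fix integers $n>k\ge1$. A cylindric partition is a weakly decreasing integer sequence $(\lambda_m)_{m\in\mathbb Z}$ with $\lambda_m=\lambda_{m+k}+n-k$. A point $(x,y)\in\mathbb Z^2$ lies in $\lambda$ if $y\le\lambda_x$. Boxes are classes of points modulo translation by multiples of $(-k,n-k)$; row $x$ of the cylinder is the image of plane row $x$ (indexed mod $k$), column $y$ the image of plane column $y$; within a row boxes are ordered left to right by $y$-coordinates of representatives in a fixed plane row. $\mu\subseteq\lambda$ means $\mu_m\le\lambda_m$ for all $m$. A (semistandard cylindric) tableau of shape $\lambda/\mu$ is a map from the boxes in $\lambda$ but not $\mu$ to a totally ordered alphabet, weakly increasing along plane rows and strictly increasing down plane columns; its shapes are part of its data. Full multi-insertion $\operatorname{FullMulti}(R,S)$: input a tableau $R$ with outer shape $\lambda$, inner shape $\mu$, and a set $S$ of boxes not in $\mu$, no two in the same column, such that $\mu$ plus $S$ is a cylindric partition. Choose an integer $r_0$. For $h=r_0,\dots,r_0+k-1$, go through the boxes of $S$ in row $h$ from left to right: if the box is in $\lambda$, remove its entry $x$ and append $(x,h+1)$ to a queue; otherwise add the box to $\lambda$. All boxes of $S$ are added to the inner shape. Then, while the current queue $q$ is nonempty: start an empty queue $q'$; remove pairs $(x,s)$ from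 the front of $q$ one at a time; if $x$ is $\ge$ every entry in row $s$, put $x$ into the leftmost box of row $s$ not in the current outer shape and add it to the outer shape; otherwise replace the leftmost entry $x'$ of row $s$ greater than $x$ by $x$ (a bump displacing $x'$) and append $(x',s+1)$ to $q'$; when $q$ is exhausted set $q:=q'$. All actions are performed one at a time, giving a time order. *)

theory Defs
  imports Main
begin

(* Cylinder for fixed n > k >= 1: plane points (x,y) in Z^2, boxes = classes modulo
   translation by multiples of (-k, n-k).  Shapes are represented by their plane
   boundary functions lam :: int => int (point (x,y) lies in lam iff y <= lam x).
   Row x is the plane row x (cylinder row = x mod k); "down" means increasing x. *)

definition cylindric :: "nat \<Rightarrow> nat \<Rightarrow> (int \<Rightarrow> int) \<Rightarrow> bool" where
  "cylindric n k lam \<longleftrightarrow>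
     (\<forall>a b. a \<le> b \<longrightarrow> lam b \<le> lam a) \<and>
     (\<forall>m. lam m = lam (m + int k) + (int n - int k))"

definition in_shape :: "(int \<Rightarrow> int) \<Rightarrow> int \<times> int \<Rightarrow> bool" where
  "in_shape lam p \<longleftrightarrow> snd p \<le> lam (fst p)"

definition in_skew :: "(int \<Rightarrow> int) \<Rightarrow> (int \<Rightarrow> int) \<Rightarrow> int \<times> int \<Rightarrow> bool" where
  "in_skew lam mu p \<longleftrightarrow> in_shape lam p \<and> \<not> in_shape mu p"

definition same_box :: "nat \<Rightarrow> nat \<Rightarrow> int \<times> int \<Rightarrow> int \<times> int \<Rightarrow> bool" where
  "same_box n k p q \<longleftrightarrow> (\<exists>t::int. q = (fst p - t * int k, snd p + t * (int n - int k)))"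

definition same_column :: "nat \<Rightarrow> nat \<Rightarrow> int \<times> int \<Rightarrow> int \<times> int \<Rightarrow> bool" where
  "same_column n k p q \<longleftrightarrow> (\<exists>t::int. snd q + t * (int n - int k) = snd p)"

text \<open>Semistandard cylindric tableau of shape lam/mu; entries T given on plane points,
  only the values on the skew shape matter, and they must be constant on boxes.\<close>
definition cyl_tableau ::
  "nat \<Rightarrow> nat \<Rightarrow> (int \<Rightarrow> int) \<Rightarrow> (int \<Rightarrow> int) \<Rightarrow> (int \<times> int \<Rightarrow> 'a::linorder) \<Rightarrow> bool" where
  "cyl_tableau n k lam mu T \<longleftrightarrow>
     cylindric n k lam \<and> cylindric n k mu \<and> (\<forall>m. mu m \<le> lam m) \<and>
     (\<forall>p q. in_skew lam mu p \<longrightarrow> same_box n k p q \<longrightarrow> T q = T p) \<and>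
     (\<forall>x y. in_skew lam mu (x, y) \<and> in_skew lam mu (x, y + 1) \<longrightarrow> T (x, y) \<le> T (x, y + 1)) \<and>
     (\<forall>x y. in_skew lam mu (x, y) \<and> in_skew lam mu (x + 1, y) \<longrightarrow> T (x, y) < T (x + 1, y))"

text \<open>Input conditions on S (a set of plane points closed under the translation, i.e. a
  set of boxes): boxes not in mu, no two in the same column, and mu plus S is the
  cylindric partition nu.\<close>
definition fullmulti_input ::
  "nat \<Rightarrow> nat \<Rightarrow> (int \<Rightarrow> int) \<Rightarrow> (int \<times> int) set \<Rightarrow> (int \<Rightarrow> int) \<Rightarrow> bool" where
  "fullmulti_input n k mu S nu \<longleftrightarrow>
     (\<forall>p q. p \<in> S \<longrightarrow> same_box n k p q \<longrightarrow> q \<in> S) \<and>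
     (\<forall>p\<in>S. \<not> in_shape mu p) \<and>
     (\<forall>p\<in>S. \<forall>q\<in>S. same_column n k p q \<longrightarrow> same_box n k p q) \<and>
     cylindric n k nu \<and>
     (\<forall>p. in_shape nu p \<longleftrightarrow> in_shape mu p \<or> p \<in> S)"

text \<open>Periodic updates: change a whole box class / a whole row class.\<close>
definition set_row :: "nat \<Rightarrow> nat \<Rightarrow> (int \<Rightarrow> int) \<Rightarrow> int \<Rightarrow> int \<Rightarrow> (int \<Rightarrow> int)" where
  "set_row n k lam h v = (\<lambda>x. if (h - x) mod int k = 0
                               then v + ((h - x) div int k) * (int n - int k) else lam x)"

definition set_ent :: "nat \<Rightarrow> nat \<Rightarrow> (int \<times> int \<Rightarrow> 'a) \<Rightarrow> int \<times> int \<Rightarrow> 'a \<Rightarrow> (int \<times> int \<Rightarrow> 'a)" where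
  "set_ent n k T p v = (\<lambda>(x, z). if same_box n k p (x, z) then v else T (x, z))"

record 'a fm_state =
  outer :: "int \<Rightarrow> int"
  inner :: "int \<Rightarrow> int"
  ent :: "int \<times> int \<Rightarrow> 'a"
  pend :: "(int \<times> int) list"      (* boxes of S still to be processed in the initial phase *)
  queue :: "('a \<times> int) list"
  nqueue :: "('a \<times> int) list"
  removed :: "(int \<times> 'a) list"    (* log of removals (plane row, entry), in time order *)

text \<open>One action of FullMulti (the identity once the algorithm has finished).\<close>
definition fm_step :: "nat \<Rightarrow> nat \<Rightarrow> 'a::linorder fm_state \<Rightarrow> 'a fm_state" where
  "fm_step n k st =
    (case pend st of
       (h, y) # rest \<Rightarrow>
         (if y \<le> outer st h then
            st\<lparr>pend := rest, queue := queue st @ [(ent st (h, y), h + 1)],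
               removed := removed st @ [(h, ent st (h, y))]\<rparr>
          else st\<lparr>pend := rest, outer := set_row n k (outer st) h (max (outer st h) y)\<rparr>)
     | [] \<Rightarrow>
       (case queue st of
          (x, s) # rest \<Rightarrow>
            (let row = {y. inner st s < y \<and> y \<le> outer st s} in
             if (\<forall>y\<in>row. ent st (s, y) \<le> x) then
               st\<lparr>queue := rest,
                  outer := set_row n k (outer st) s (outer st s + 1),
                  ent := set_ent n k (ent st) (s, outer st s + 1) x\<rparr>
             else
               (let y0 = (LEAST y. y \<in> row \<and> x < ent st (s, y)); x' = ent st (s, y0) in
                st\<lparr>queue := rest, ent := set_ent n k (ent st) (s, y0) x,
                   nqueue := nqueue st @ [(x', s + 1)],
                   removed := removed st @ [(s, x')]\<rparr>))
        | [] \<Rightarrow> (if nqueue st = [] then st else st\<lparr>queue := nqueue st, nqueue := []\<rparr>)))"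

text \<open>Initial state for FullMulti(R,S) with starting row r0; the inner shape is already
  mu plus S = nu, and the boxes of S are listed row by row (rows r0..r0+k-1),
  left to right within each row.\<close>
definition fm_init ::
  "nat \<Rightarrow> nat \<Rightarrow> (int \<Rightarrow> int) \<Rightarrow> (int \<Rightarrow> int) \<Rightarrow> (int \<times> int \<Rightarrow> 'a) \<Rightarrow> (int \<times> int) set
     \<Rightarrow> (int \<Rightarrow> int) \<Rightarrow> int \<Rightarrow> 'a fm_state" where
  "fm_init n k lam mu T S nu r0 =
     \<lparr>outer = lam, inner = nu, ent = T,
      pend = concat (map (\<lambda>h. map (\<lambda>y. (h, y)) (filter (\<lambda>y. (h, y) \<in> S) [mu h + 1 .. nu h]))
                         [r0 .. r0 + int k - 1]),
      queue = [], nqueue = [], removed = []\<rparr>"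

end

theory Submission
  imports Defs
begin

text \<open>
  For each row
  class r consider its log, the list of values removed from r. Every value removed from row
  r - 1 is queued for row r, and the queues are first-in-first-out, so the values still waiting
  for row r form a suffix of the log of row r - 1; the values of the log before that suffix have
  already been inserted into row r. The key invariant says that every entry of row r is either at
  most one of these inserted values, or at least every value removed from r so far. When x
  arrives at row r it is at least all values inserted before (the log of row r - 1 is sorted by
  induction), so a bump displaces the leftmost entry greater than x, which then cannot be
  dominated by an inserted value and is therefore at least every earlier removal from r. In the
  initial phase the boxes of S are processed left to right, and the entry of a pending box is at
  least the earlier removals of its row because the rows of the tableau weakly increase.
\<close>

section \<open>Periodic row data and boxes\<close>

definition cyl_periodic :: "nat \<Rightarrow> nat \<Rightarrow> (int \<Rightarrow> int) \<Rightarrow> bool" where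
  "cyl_periodic n k f \<longleftrightarrow> (\<forall>x. f x = f (x + int k) + (int n - int k))"

lemma cylindric_imp_cyl_periodic: "cylindric n k f \<Longrightarrow> cyl_periodic n k f"
  unfolding cylindric_def cyl_periodic_def by blast

lemma cyl_periodic_shift:
  assumes "cyl_periodic n k f"
  shows "f (x - t * int k) = f x + t * (int n - int k)"
proof (induction t rule: int_induct[where k = 0])
  case base
  then show ?case by simp
next
  case (step1 i)
  have "f (x - (i + 1) * int k) = f (x - (i + 1) * int k + int k) + (int n - int k)"
    using assms unfolding cyl_periodic_def by blast
  also have "x - (i + 1) * int k + int k = x - i * int k"
    by (simp add: algebra_simps)
  finally show ?case
    using step1 by (simp add: algebra_simps)
next
  case (step2 i)
  have "f (x - i * int k) = f (x - i * int k + int k) + (int n - int k)"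
    using assms unfolding cyl_periodic_def by blast
  also have "x - i * int k + int k = x - (i - 1) * int k"
    by (simp add: algebra_simps)
  finally show ?case
    using step2 by (simp add: algebra_simps)
qed

lemma mod_diff_mult_self_int: "(c - t * int k) mod int k = c mod int k"
proof -
  have "c - t * int k = c + (- t) * int k"
    by simp
  then show ?thesis
    by (metis mod_mult_self1)
qed

lemma mod_diff_mult_self_pred_int: "(c - t * int k - 1) mod int k = (c - 1) mod int k"
  using mod_diff_mult_self_int[of "c - 1" t k] by (simp add: algebra_simps)

lemma eq_diff_div_mult_if_mod_eq:
  assumes "c mod int k = s mod int k"
  shows "c = s - ((s - c) div int k) * int k"
proof -
  have "int k dvd s - c"
    using assms[symmetric] by (simp add: mod_eq_dvd_iff)
  then show ?thesis
    by simp
qed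

lemma diff_mod_eq_0_iff: "(h - c) mod int k = 0 \<longleftrightarrow> c mod int k = h mod int k"
  by (simp add: mod_eq_dvd_iff dvd_diff_commute mod_eq_0_iff_dvd)

lemma pred_mod_eq_iff: "(c - 1) mod int k = h mod int k \<longleftrightarrow> c mod int k = (h + 1) mod int k"
  by (simp add: mod_eq_dvd_iff algebra_simps)

lemma mod_neq_if_in_window:
  assumes "r0 \<le> a" "a < b" "b \<le> r0 + int k - 1"
  shows "a mod int k \<noteq> b mod int k"
proof
  assume "a mod int k = b mod int k"
  then have "int k dvd b - a"
    by (metis mod_eq_dvd_iff)
  then have "int k \<le> b - a"
    using assms by (intro zdvd_imp_le) auto
  then show False
    using assms by simp
qed

lemma int_le_chain:
  fixes g :: "int \<Rightarrow> 'a::order"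
  assumes "\<And>z. a \<le> z \<Longrightarrow> z < b \<Longrightarrow> g z \<le> g (z + 1)" and "a \<le> b"
  shows "g a \<le> g b"
proof -
  have "c \<le> b \<longrightarrow> g a \<le> g c" if "a \<le> c" for c
    using that
  proof (induction c rule: int_ge_induct)
    case (step c)
    then show ?case
      using assms(1)[of c] by (auto intro: order_trans)
  qed simp
  then show ?thesis
    using assms(2) by blast
qed

lemma set_row_other: "c mod int k \<noteq> h mod int k \<Longrightarrow> set_row n k f h v c = f c"
  unfolding set_row_def by (simp add: diff_mod_eq_0_iff)

lemma set_row_same:
  "c mod int k = h mod int k \<Longrightarrow> set_row n k f h v c = v + ((h - c) div int k) * (int n - int k)"
  unfolding set_row_def by (simp add: diff_mod_eq_0_iff)

lemma set_row_at_row_class: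
  assumes "cyl_periodic n k f" and "c mod int k = h mod int k"
  shows "set_row n k f h (f h + d) c = f c + d"
proof -
  have "c = h - ((h - c) div int k) * int k"
    using eq_diff_div_mult_if_mod_eq[OF assms(2)] .
  then have "f c = f h + ((h - c) div int k) * (int n - int k)"
    using cyl_periodic_shift[OF assms(1), of h "(h - c) div int k"] by simp
  then show ?thesis
    using set_row_same[OF assms(2)] by simp
qed

lemma cyl_periodic_set_row:
  assumes "cyl_periodic n k f" and "0 < k"
  shows "cyl_periodic n k (set_row n k f h v)"
  unfolding cyl_periodic_def
proof
  fix x
  have shift: "h - (x + int k) = (h - x) - int k"
    by simp
  have mod_eq: "(h - (x + int k)) mod int k = (h - x) mod int k"
    unfolding shift by (rule minus_mod_self2)
  have "((h - x - int k) + int k) div int k = (h - x - int k) div int k + 1"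
    using assms(2) by (intro div_add_self2) simp
  then have div_eq: "(h - (x + int k)) div int k = (h - x) div int k - 1"
    unfolding shift by simp
  show "set_row n k f h v x = set_row n k f h v (x + int k) + (int n - int k)"
    using assms(1) unfolding set_row_def mod_eq div_eq cyl_periodic_def
    by (simp add: algebra_simps)
qed

lemma same_box_shift_iff:
  "same_box n k p (a - t * int k, b + t * (int n - int k)) \<longleftrightarrow> same_box n k p (a, b)"
proof
  assume "same_box n k p (a - t * int k, b + t * (int n - int k))"
  then obtain u where
    "(a - t * int k, b + t * (int n - int k)) = (fst p - u * int k, snd p + u * (int n - int k))"
    unfolding same_box_def by blast
  then have "(a, b) = (fst p - (u - t) * int k, snd p + (u - t) * (int n - int k))"
    by (auto simp: algebra_simps)
  then show "same_box n k p (a, b)"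
    unfolding same_box_def by blast
next
  assume "same_box n k p (a, b)"
  then obtain u where "(a, b) = (fst p - u * int k, snd p + u * (int n - int k))"
    unfolding same_box_def by blast
  then have "(a - t * int k, b + t * (int n - int k))
      = (fst p - (u + t) * int k, snd p + (u + t) * (int n - int k))"
    by (auto simp: algebra_simps)
  then show "same_box n k p (a - t * int k, b + t * (int n - int k))"
    unfolding same_box_def by blast
qed

lemma same_box_mod_eq: "same_box n k (s, y) (c, z) \<Longrightarrow> c mod int k = s mod int k"
  unfolding same_box_def by (auto simp: mod_diff_mult_self_int)

lemma same_box_same_row_iff: "0 < k \<Longrightarrow> same_box n k (s, y) (s, z) \<longleftrightarrow> z = y"
  unfolding same_box_def by auto

lemma same_box_after_row_end_iff:
  assumes "cyl_periodic n k f"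
  shows "same_box n k (s, f s + 1) (c, z) \<longleftrightarrow> c mod int k = s mod int k \<and> z = f c + 1"
proof
  assume "same_box n k (s, f s + 1) (c, z)"
  then obtain u where "c = s - u * int k" "z = f s + 1 + u * (int n - int k)"
    unfolding same_box_def by auto
  then show "c mod int k = s mod int k \<and> z = f c + 1"
    using cyl_periodic_shift[OF assms, of s u] by (auto simp: mod_diff_mult_self_int)
next
  assume c: "c mod int k = s mod int k \<and> z = f c + 1"
  define t where "t = (s - c) div int k"
  have "c = s - t * int k"
    unfolding t_def using eq_diff_div_mult_if_mod_eq c by blast
  moreover have "z = f s + 1 + t * (int n - int k)"
    using c cyl_periodic_shift[OF assms, of s t] calculation by simp
  ultimately show "same_box n k (s, f s + 1) (c, z)"
    unfolding same_box_def by auto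
qed

lemma set_ent_apply: "set_ent n k T p v (c, z) = (if same_box n k p (c, z) then v else T (c, z))"
  unfolding set_ent_def by simp

section \<open>The invariant\<close>

definition active :: "'a fm_state \<Rightarrow> int \<Rightarrow> int \<Rightarrow> bool" where
  "active st x y \<longleftrightarrow> inner st x < y \<and> y \<le> outer st x"

definition entries_periodic :: "nat \<Rightarrow> nat \<Rightarrow> 'a fm_state \<Rightarrow> bool" where
  "entries_periodic n k st \<longleftrightarrow> (\<forall>x y t. active st x y \<longrightarrow>
      ent st (x - t * int k, y + t * (int n - int k)) = ent st (x, y))"

definition row_log :: "nat \<Rightarrow> 'a fm_state \<Rightarrow> int \<Rightarrow> 'a list" where
  "row_log k st r = map snd (filter (\<lambda>e. fst e mod int k = r mod int k) (removed st))"

definition queued_for :: "nat \<Rightarrow> 'a fm_state \<Rightarrow> int \<Rightarrow> 'a list" where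
  "queued_for k st r = map fst (filter (\<lambda>e. snd e mod int k = r mod int k) (queue st @ nqueue st))"

text \<open>Here \<open>pre\<close> consists of the values of the log of row \<open>r - 1\<close> that have already been
  inserted into row \<open>r\<close>.\<close>

definition row_log_bound :: "nat \<Rightarrow> 'a::linorder fm_state \<Rightarrow> int \<Rightarrow> bool" where
  "row_log_bound k st r \<longleftrightarrow> (\<forall>pre. row_log k st (r - 1) = pre @ queued_for k st r \<longrightarrow>
     (\<forall>y. active st r y \<longrightarrow>
        (\<exists>v\<in>set pre. ent st (r, y) \<le> v) \<or> (\<forall>w\<in>set (row_log k st r). w \<le> ent st (r, y))))"

definition row_sorted :: "'a::linorder fm_state \<Rightarrow> int \<Rightarrow> bool" where
  "row_sorted st r \<longleftrightarrow>
     (\<forall>y. active st r y \<longrightarrow> active st r (y + 1) \<longrightarrow> ent st (r, y) \<le> ent st (r, y + 1))"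

definition pending_bounds :: "nat \<Rightarrow> 'a::linorder fm_state \<Rightarrow> bool" where
  "pending_bounds k st \<longleftrightarrow> (\<forall>h y. (h, y) \<in> set (pend st) \<longrightarrow> y \<le> inner st h \<and>
     (y \<le> outer st h \<longrightarrow> (\<forall>w\<in>set (row_log k st h). w \<le> ent st (h, y)) \<and>
        (\<forall>y'. y < y' \<and> y' \<le> outer st h \<and> (inner st h < y' \<or> (h, y') \<in> set (pend st))
              \<longrightarrow> ent st (h, y) \<le> ent st (h, y'))))"

definition pending_order :: "nat \<Rightarrow> int \<times> int \<Rightarrow> int \<times> int \<Rightarrow> bool" where
  "pending_order k p q \<longleftrightarrow> (fst p mod int k = fst q mod int k \<longrightarrow> fst p = fst q \<and> snd p < snd q)"

definition fm_invariant :: "nat \<Rightarrow> nat \<Rightarrow> 'a::linorder fm_state \<Rightarrow> bool" where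
  "fm_invariant n k st \<longleftrightarrow> cyl_periodic n k (outer st) \<and> cyl_periodic n k (inner st) \<and>
     entries_periodic n k st \<and> (\<forall>r. sorted (row_log k st r)) \<and>
     (\<forall>r. \<exists>pre. row_log k st (r - 1) = pre @ queued_for k st r) \<and>
     (\<forall>r. row_log_bound k st r) \<and> (\<forall>r. row_sorted st r) \<and>
     (pend st \<noteq> [] \<longrightarrow> nqueue st = [] \<and> (\<forall>r. row_log k st (r - 1) = queued_for k st r)) \<and>
     pending_bounds k st \<and> sorted_wrt (pending_order k) (pend st)"

lemma row_log_mod_cong: "r mod int k = r' mod int k \<Longrightarrow> row_log k st r = row_log k st r'"
  unfolding row_log_def by simp

lemma active_shift_iff:
  assumes "cyl_periodic n k (outer st)" and "cyl_periodic n k (inner st)"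
  shows "active st (c - t * int k) y \<longleftrightarrow> active st c (y - t * (int n - int k))"
  using cyl_periodic_shift[OF assms(1), of c t] cyl_periodic_shift[OF assms(2), of c t]
  unfolding active_def by auto

lemma ent_shift:
  assumes "entries_periodic n k st" and "active st c (y - t * (int n - int k))"
  shows "ent st (c - t * int k, y) = ent st (c, y - t * (int n - int k))"
  using assms unfolding entries_periodic_def by (metis diff_add_cancel)

lemma row_log_bound_shift:
  assumes "cyl_periodic n k (outer st)" "cyl_periodic n k (inner st)" "entries_periodic n k st"
    and "row_log_bound k st c"
  shows "row_log_bound k st (c - t * int k)"
proof -
  have logs: "row_log k st (c - t * int k) = row_log k st c"
    "row_log k st (c - t * int k - 1) = row_log k st (c - 1)"
    unfolding row_log_def using mod_diff_mult_self_int mod_diff_mult_self_pred_int by metis+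
  have queued: "queued_for k st (c - t * int k) = queued_for k st c"
    unfolding queued_for_def using mod_diff_mult_self_int by metis
  show ?thesis
    unfolding row_log_bound_def logs queued
  proof (intro allI impI)
    fix pre y
    assume pre: "row_log k st (c - 1) = pre @ queued_for k st c"
      and act: "active st (c - t * int k) y"
    have act': "active st c (y - t * (int n - int k))"
      using act active_shift_iff[OF assms(1,2)] by blast
    show "(\<exists>v\<in>set pre. ent st (c - t * int k, y) \<le> v)
        \<or> (\<forall>w\<in>set (row_log k st c). w \<le> ent st (c - t * int k, y))"
      unfolding ent_shift[OF assms(3) act'] using assms(4) pre act'
      unfolding row_log_bound_def by blast
  qed
qed

lemma row_sorted_shift:
  assumes "cyl_periodic n k (outer st)" "cyl_periodic n k (inner st)" "entries_periodic n k st"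
    and "row_sorted st c"
  shows "row_sorted st (c - t * int k)"
  unfolding row_sorted_def
proof (intro allI impI)
  fix y
  assume act: "active st (c - t * int k) y" "active st (c - t * int k) (y + 1)"
  let ?d = "t * (int n - int k)"
  have act': "active st c (y - ?d)" "active st c (y - ?d + 1)"
    using act active_shift_iff[OF assms(1,2)] by (auto simp: algebra_simps)
  have "ent st (c, y - ?d) \<le> ent st (c, y - ?d + 1)"
    using assms(4) act' unfolding row_sorted_def by blast
  moreover have "ent st (c - t * int k, y + 1) = ent st (c, y - ?d + 1)"
    using ent_shift[OF assms(3), of c "y + 1" t] act'(2) by (simp add: algebra_simps)
  ultimately show "ent st (c - t * int k, y) \<le> ent st (c - t * int k, y + 1)"
    using ent_shift[OF assms(3) act'(1)] by simp
qed

lemma row_invariants_mod_cong: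
  assumes "cyl_periodic n k (outer st)" "cyl_periodic n k (inner st)" "entries_periodic n k st"
    and "row_log_bound k st s" "row_sorted st s" and "c mod int k = s mod int k"
  shows "row_log_bound k st c" "row_sorted st c"
  using row_log_bound_shift[OF assms(1-4)] row_sorted_shift[OF assms(1-3,5)]
    eq_diff_div_mult_if_mod_eq[OF assms(6)] by metis+

section \<open>Preservation of the invariant\<close>

locale fm_invariant_state =
  fixes n k :: nat and st :: "'a::linorder fm_state"
  assumes invariant: "fm_invariant n k st" and k_pos: "0 < k"
begin

lemma
  shows periodic_outer: "cyl_periodic n k (outer st)"
    and periodic_inner: "cyl_periodic n k (inner st)"
    and periodic_entries: "entries_periodic n k st"
    and sorted_row_log: "sorted (row_log k st r)"
    and row_log_suffix: "\<exists>pre. row_log k st (r - 1) = pre @ queued_for k st r"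
    and log_bound: "row_log_bound k st r"
    and sorted_row: "row_sorted st r"
    and pending: "pending_bounds k st"
    and sorted_pending: "sorted_wrt (pending_order k) (pend st)"
  using invariant unfolding fm_invariant_def by auto

lemma initial_phase:
  "pend st \<noteq> [] \<Longrightarrow> nqueue st = [] \<and> row_log k st (r - 1) = queued_for k st r"
  using invariant unfolding fm_invariant_def by auto

end

locale fm_removal_step = fm_invariant_state +
  fixes h y :: int and rest :: "(int \<times> int) list"
  assumes pend_head: "pend st = (h, y) # rest" and removable: "y \<le> outer st h"
begin

definition next_state :: "'a fm_state" where
  "next_state = st\<lparr>pend := rest, queue := queue st @ [(ent st (h, y), h + 1)],
     removed := removed st @ [(h, ent st (h, y))]\<rparr>"

lemma fm_step_eq: "fm_step n k st = next_state"
  by (simp add: fm_step_def next_state_def pend_head removable)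

lemma next_state_simps [simp]:
  "outer next_state = outer st" "inner next_state = inner st" "ent next_state = ent st"
  "pend next_state = rest" "nqueue next_state = nqueue st" "active next_state = active st"
  by (simp_all add: next_state_def active_def fun_eq_iff)

lemma removed_entry_bounds:
  shows "y \<le> inner st h" and "\<forall>w\<in>set (row_log k st h). w \<le> ent st (h, y)"
    and "\<And>y'. y < y' \<Longrightarrow> y' \<le> outer st h \<Longrightarrow> inner st h < y' \<or> (h, y') \<in> set (pend st)
           \<Longrightarrow> ent st (h, y) \<le> ent st (h, y')"
  using pending pend_head removable unfolding pending_bounds_def by auto

lemma row_log_next:
  "row_log k next_state r = row_log k st r @ (if r mod int k = h mod int k then [ent st (h, y)] else [])"
  unfolding next_state_def row_log_def by simp

lemma queued_for_next:
  "queued_for k next_state r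
     = queued_for k st r @ (if r mod int k = (h + 1) mod int k then [ent st (h, y)] else [])"
  using initial_phase pend_head by (simp add: queued_for_def next_state_def)

lemma row_log_pred_next: "row_log k next_state (r - 1) = queued_for k next_state r"
  unfolding row_log_next queued_for_next pred_mod_eq_iff using initial_phase pend_head by simp

lemma row_log_bound_next: "row_log_bound k next_state r"
proof (cases "r mod int k = h mod int k")
  case True
  have "row_log_bound k next_state h"
    unfolding row_log_bound_def
  proof (intro allI impI)
    fix pre z
    assume act: "active next_state h z"
    have "\<forall>w\<in>set (row_log k st h). w \<le> ent st (h, z)"
      using log_bound[of h] act initial_phase[of h] pend_head unfolding row_log_bound_def by fastforce
    moreover have "ent st (h, y) \<le> ent st (h, z)"
      using removed_entry_bounds act unfolding active_def by auto
    ultimately show "(\<exists>v\<in>set pre. ent next_state (h, z) \<le> v)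
        \<or> (\<forall>w\<in>set (row_log k next_state h). w \<le> ent next_state (h, z))"
      unfolding row_log_next by auto
  qed
  then show ?thesis
    using row_invariants_mod_cong(1)[of n k next_state h] True periodic_outer periodic_inner
      periodic_entries sorted_row
    by (simp add: entries_periodic_def row_sorted_def)
next
  case False
  then show ?thesis
    using log_bound[of r] row_log_pred_next initial_phase[of r] pend_head
    unfolding row_log_bound_def row_log_next by fastforce
qed

lemma pending_bounds_next: "pending_bounds k next_state"
  unfolding pending_bounds_def next_state_simps
proof (intro allI impI)
  fix h2 y2
  assume mem: "(h2, y2) \<in> set rest"
  then have mem': "(h2, y2) \<in> set (pend st)"
    using pend_head by simp
  have order: "pending_order k (h, y) (h2, y2)"
    using sorted_pending pend_head mem by simp
  have log_new: "\<forall>w\<in>set (row_log k next_state h2). w \<le> ent st (h2, y2)"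
    if "y2 \<le> outer st h2" "\<forall>w\<in>set (row_log k st h2). w \<le> ent st (h2, y2)"
  proof (cases "h2 mod int k = h mod int k")
    case True
    then have "h2 = h" "y < y2"
      using order unfolding pending_order_def by auto
    then have "ent st (h, y) \<le> ent st (h2, y2)"
      using removed_entry_bounds(3)[of y2] that mem' by simp
    then show ?thesis
      using that unfolding row_log_next by auto
  qed (use that in \<open>simp add: row_log_next\<close>)
  show "y2 \<le> inner st h2 \<and> (y2 \<le> outer st h2 \<longrightarrow>
      (\<forall>w\<in>set (row_log k next_state h2). w \<le> ent st (h2, y2)) \<and>
      (\<forall>y'. y2 < y' \<and> y' \<le> outer st h2 \<and> (inner st h2 < y' \<or> (h2, y') \<in> set rest)
            \<longrightarrow> ent st (h2, y2) \<le> ent st (h2, y')))"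
    using pending mem' log_new pend_head unfolding pending_bounds_def by auto
qed

lemma invariant_next: "fm_invariant n k next_state"
proof -
  have "sorted (row_log k next_state r)" for r
  proof (cases "r mod int k = h mod int k")
    case True
    moreover have "row_log k st r = row_log k st h"
      by (rule row_log_mod_cong[OF True])
    ultimately show ?thesis
      using sorted_row_log[of r] removed_entry_bounds(2)
      unfolding row_log_next by (auto simp: sorted_append)
  qed (simp add: row_log_next sorted_row_log)
  moreover have "entries_periodic n k next_state" "row_sorted next_state r" for r
    using periodic_entries sorted_row by (simp_all add: entries_periodic_def row_sorted_def)
  ultimately show ?thesis
    unfolding fm_invariant_def
    using periodic_outer periodic_inner row_log_pred_next row_log_bound_next pending_bounds_next
      sorted_pending pend_head initial_phase by auto
qed

end

locale fm_skip_step = fm_invariant_state +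
  fixes h y :: int and rest :: "(int \<times> int) list"
  assumes pend_head: "pend st = (h, y) # rest" and outside: "\<not> y \<le> outer st h"
begin

definition next_state :: "'a fm_state" where
  "next_state = st\<lparr>pend := rest, outer := set_row n k (outer st) h y\<rparr>"

lemma fm_step_eq: "fm_step n k st = next_state"
  using outside by (simp add: fm_step_def next_state_def pend_head max_def)

lemma next_state_simps [simp]:
  "inner next_state = inner st" "ent next_state = ent st" "pend next_state = rest"
  "nqueue next_state = nqueue st" "outer next_state = set_row n k (outer st) h y"
  "row_log k next_state = row_log k st" "queued_for k next_state = queued_for k st"
  by (simp_all add: next_state_def row_log_def queued_for_def fun_eq_iff)

text \<open>As \<open>outer st h < y \<le> inner st h\<close>, row \<open>h\<close> has no active boxes before or after the step.\<close>

lemma active_next_iff: "active next_state c z \<longleftrightarrow> c mod int k \<noteq> h mod int k \<and> active st c z"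
proof (cases "c mod int k = h mod int k")
  case True
  have "y \<le> inner st h"
    using pending pend_head unfolding pending_bounds_def by simp
  moreover have "c = h - ((h - c) div int k) * int k"
    using eq_diff_div_mult_if_mod_eq[OF True] .
  then have "inner st c = inner st h + ((h - c) div int k) * (int n - int k)"
    using cyl_periodic_shift[OF periodic_inner, of h "(h - c) div int k"] by simp
  ultimately show ?thesis
    unfolding active_def next_state_simps set_row_same[OF True] using True by auto
qed (simp add: active_def set_row_other)

lemma pending_bounds_next: "pending_bounds k next_state"
  unfolding pending_bounds_def next_state_simps
proof (intro allI impI)
  fix h2 y2
  assume mem: "(h2, y2) \<in> set rest"
  have order: "pending_order k (h, y) (h2, y2)"
    using sorted_pending pend_head mem by simp
  have old: "y2 \<le> inner st h2 \<and> (y2 \<le> outer st h2 \<longrightarrow>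
      (\<forall>w\<in>set (row_log k st h2). w \<le> ent st (h2, y2)) \<and>
      (\<forall>y'. y2 < y' \<and> y' \<le> outer st h2 \<and> (inner st h2 < y' \<or> (h2, y') \<in> set (pend st))
            \<longrightarrow> ent st (h2, y2) \<le> ent st (h2, y')))"
    using pending mem pend_head unfolding pending_bounds_def by auto
  show "y2 \<le> inner st h2 \<and> (y2 \<le> set_row n k (outer st) h y h2 \<longrightarrow>
      (\<forall>w\<in>set (row_log k st h2). w \<le> ent st (h2, y2)) \<and>
      (\<forall>y'. y2 < y' \<and> y' \<le> set_row n k (outer st) h y h2 \<and> (inner st h2 < y' \<or> (h2, y') \<in> set rest)
            \<longrightarrow> ent st (h2, y2) \<le> ent st (h2, y')))"
  proof (cases "h2 mod int k = h mod int k")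
    case True
    then have "h2 = h" "y < y2"
      using order unfolding pending_order_def by auto
    then show ?thesis
      using old set_row_same[OF True, of n "outer st" y] by auto
  next
    case False
    then show ?thesis
      using old set_row_other[OF False] pend_head by auto
  qed
qed

lemma invariant_next: "fm_invariant n k next_state"
proof -
  have "entries_periodic n k next_state" "row_log_bound k next_state r" "row_sorted next_state r"
    for r
    using periodic_entries log_bound[of r] sorted_row[of r]
    unfolding entries_periodic_def row_log_bound_def row_sorted_def active_next_iff by simp_all
  then show ?thesis
    unfolding fm_invariant_def
    using cyl_periodic_set_row[OF periodic_outer k_pos] periodic_inner sorted_row_log
      row_log_suffix pending_bounds_next sorted_pending pend_head initial_phase
    by auto
qed

end

locale fm_queue_step = fm_invariant_state +
  fixes x :: "'a::linorder" and s :: int and rest :: "('a \<times> int) list"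
  assumes no_pending: "pend st = []" and queue_head: "queue st = (x, s) # rest"
begin

definition queue_tail :: "int \<Rightarrow> 'a list" where
  "queue_tail c = map fst (filter (\<lambda>e. snd e mod int k = c mod int k) (rest @ nqueue st))"

lemma queued_for_eq:
  "queued_for k st c = (if c mod int k = s mod int k then [x] else []) @ queue_tail c"
  unfolding queued_for_def queue_tail_def queue_head by simp

lemma inserted_before_head:
  obtains pre where "row_log k st (s - 1) = pre @ x # queue_tail s" and "\<forall>v\<in>set pre. v \<le> x"
proof -
  obtain pre where pre: "row_log k st (s - 1) = pre @ x # queue_tail s"
    using row_log_suffix[of s] queued_for_eq[of s] by auto
  moreover have "\<forall>v\<in>set pre. v \<le> x"
    using sorted_row_log[of "s - 1"] unfolding pre by (simp add: sorted_append)
  ultimately show thesis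
    using that by blast
qed

end

locale fm_append_step = fm_queue_step +
  assumes fits: "\<forall>y. active st s y \<longrightarrow> ent st (s, y) \<le> x"
begin

definition next_state :: "'a fm_state" where
  "next_state = st\<lparr>queue := rest, outer := set_row n k (outer st) s (outer st s + 1),
     ent := set_ent n k (ent st) (s, outer st s + 1) x\<rparr>"

lemma fm_step_eq: "fm_step n k st = next_state"
  using fits by (simp add: fm_step_def next_state_def no_pending queue_head active_def)

lemma next_state_simps [simp]:
  "inner next_state = inner st" "pend next_state = []" "row_log k next_state = row_log k st"
  "ent next_state = set_ent n k (ent st) (s, outer st s + 1) x"
  "queued_for k next_state = queue_tail"
  by (simp_all add: next_state_def no_pending row_log_def queued_for_def queue_tail_def fun_eq_iff)

lemma outer_next:
  "outer next_state c = (if c mod int k = s mod int k then outer st c + 1 else outer st c)"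
  using set_row_at_row_class[OF periodic_outer, of c s 1]
  by (simp add: next_state_def set_row_other)

lemma active_next_iff:
  "active next_state c z \<longleftrightarrow>
     active st c z \<or> (c mod int k = s mod int k \<and> z = outer st c + 1 \<and> inner st c < z)"
  by (auto simp: active_def outer_next)

lemma new_box_iff:
  "same_box n k (s, outer st s + 1) (c, z) \<longleftrightarrow> c mod int k = s mod int k \<and> z = outer st c + 1"
  by (rule same_box_after_row_end_iff[OF periodic_outer])

lemma ent_next_old: "active st c z \<Longrightarrow> ent next_state (c, z) = ent st (c, z)"
  by (auto simp: set_ent_apply new_box_iff active_def)

lemma ent_next_new: "c mod int k = s mod int k \<Longrightarrow> ent next_state (c, outer st c + 1) = x"
  by (simp add: set_ent_apply new_box_iff)

lemma entries_periodic_next: "entries_periodic n k next_state"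
  unfolding entries_periodic_def
proof (intro allI impI)
  fix a b t
  assume act: "active next_state a b"
  show "ent next_state (a - t * int k, b + t * (int n - int k)) = ent next_state (a, b)"
  proof (cases "active st a b")
    case True
    then have "active st (a - t * int k) (b + t * (int n - int k))"
      using active_shift_iff[OF periodic_outer periodic_inner] by simp
    then show ?thesis
      using ent_next_old True periodic_entries unfolding entries_periodic_def by metis
  next
    case False
    then have "same_box n k (s, outer st s + 1) (a, b)"
      using act active_next_iff new_box_iff by blast
    then show ?thesis
      by (simp add: set_ent_apply same_box_shift_iff)
  qed
qed

lemma row_log_bound_next_at_s: "row_log_bound k next_state s"
  unfolding row_log_bound_def
proof (intro allI impI)
  fix pre z
  assume pre: "row_log k next_state (s - 1) = pre @ queued_for k next_state s"
    and act: "active next_state s z"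
  obtain pre0 where pre0: "row_log k st (s - 1) = pre0 @ x # queue_tail s"
    using inserted_before_head by blast
  have pre_eq: "pre = pre0 @ [x]"
    using pre pre0 by simp
  show "(\<exists>v\<in>set pre. ent next_state (s, z) \<le> v)
      \<or> (\<forall>w\<in>set (row_log k next_state s). w \<le> ent next_state (s, z))"
  proof (cases "active st s z")
    case True
    then show ?thesis
      using log_bound[of s] pre0 queued_for_eq[of s] ent_next_old[OF True] pre_eq
      unfolding row_log_bound_def by fastforce
  next
    case False
    then show ?thesis
      using act active_next_iff ent_next_new[of s] pre_eq by auto
  qed
qed

lemma row_sorted_next_at_s: "row_sorted next_state s"
  unfolding row_sorted_def
proof (intro allI impI)
  fix z
  assume act: "active next_state s z" "active next_state s (z + 1)"
  then have act_z: "active st s z"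
    using active_next_iff[of s z] active_next_iff[of s "z + 1"] unfolding active_def by auto
  show "ent next_state (s, z) \<le> ent next_state (s, z + 1)"
  proof (cases "active st s (z + 1)")
    case True
    then show ?thesis
      using sorted_row[of s] act_z ent_next_old unfolding row_sorted_def by metis
  next
    case False
    then have "z + 1 = outer st s + 1"
      using act active_next_iff by blast
    then show ?thesis
      using ent_next_old[OF act_z] fits act_z ent_next_new[of s] by auto
  qed
qed

lemma periodic_outer_next: "cyl_periodic n k (outer next_state)"
  using cyl_periodic_set_row[OF periodic_outer k_pos] by (simp add: next_state_def)

lemma row_invariants_next: "row_log_bound k next_state c \<and> row_sorted next_state c"
proof (cases "c mod int k = s mod int k")
  case True
  then show ?thesis
    using row_invariants_mod_cong[OF periodic_outer_next _ entries_periodic_next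
        row_log_bound_next_at_s row_sorted_next_at_s True]
      periodic_inner by simp
next
  case False
  have "active next_state c = active st c"
    using active_next_iff False by (auto simp: fun_eq_iff)
  moreover have "queue_tail c = queued_for k st c"
    using queued_for_eq[of c] False by simp
  ultimately show ?thesis
    using log_bound[of c] sorted_row[of c] ent_next_old
    unfolding row_log_bound_def row_sorted_def by (metis next_state_simps(3,5))
qed

lemma invariant_next: "fm_invariant n k next_state"
proof -
  have "\<exists>pre. row_log k next_state (c - 1) = pre @ queued_for k next_state c" for c
    using row_log_suffix[of c] queued_for_eq[of c] by (metis append.assoc next_state_simps(3,5))
  moreover have "pending_bounds k next_state"
    by (simp add: pending_bounds_def)
  ultimately show ?thesis
    unfolding fm_invariant_def
    using periodic_outer_next periodic_inner entries_periodic_next sorted_row_log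
      row_invariants_next by auto
qed

end

locale fm_bump_step = fm_queue_step +
  assumes bumps: "\<not> (\<forall>y. active st s y \<longrightarrow> ent st (s, y) \<le> x)"
begin

definition bump_pos :: int where
  "bump_pos = (LEAST y. active st s y \<and> x < ent st (s, y))"

abbreviation bumped :: 'a where
  "bumped \<equiv> ent st (s, bump_pos)"

lemma bump_pos: "active st s bump_pos" "x < bumped"
  and bump_pos_le: "active st s z \<Longrightarrow> x < ent st (s, z) \<Longrightarrow> bump_pos \<le> z"
proof -
  define A where "A = {y. active st s y \<and> x < ent st (s, y)}"
  have "finite A"
    unfolding A_def active_def by (rule finite_subset[of _ "{inner st s <.. outer st s}"]) auto
  moreover have "A \<noteq> {}"
    using bumps unfolding A_def by auto
  ultimately have "Min A \<in> A" "\<And>y. y \<in> A \<Longrightarrow> Min A \<le> y"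
    by auto
  moreover from this have "bump_pos = Min A"
    unfolding bump_pos_def by (intro Least_equality) (auto simp: A_def)
  ultimately show "active st s bump_pos" "x < bumped"
    and "active st s z \<Longrightarrow> x < ent st (s, z) \<Longrightarrow> bump_pos \<le> z"
    unfolding A_def by auto
qed

definition next_state :: "'a fm_state" where
  "next_state = st\<lparr>queue := rest, ent := set_ent n k (ent st) (s, bump_pos) x,
     nqueue := nqueue st @ [(bumped, s + 1)], removed := removed st @ [(s, bumped)]\<rparr>"

lemma fm_step_eq: "fm_step n k st = next_state"
  using bumps
  by (auto simp: fm_step_def next_state_def no_pending queue_head active_def Let_def bump_pos_def)

lemma next_state_simps [simp]:
  "inner next_state = inner st" "outer next_state = outer st" "pend next_state = []"
  "active next_state = active st" "ent next_state = set_ent n k (ent st) (s, bump_pos) x"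
  by (simp_all add: next_state_def no_pending active_def fun_eq_iff)

lemma ent_next_other_row: "c mod int k \<noteq> s mod int k \<Longrightarrow> ent next_state (c, z) = ent st (c, z)"
  using same_box_mod_eq[of n k s bump_pos c z] by (auto simp: set_ent_apply)

lemma ent_next_row: "ent next_state (s, z) = (if z = bump_pos then x else ent st (s, z))"
  using same_box_same_row_iff[OF k_pos] by (simp add: set_ent_apply)

lemma row_log_next:
  "row_log k next_state c = row_log k st c @ (if c mod int k = s mod int k then [bumped] else [])"
  unfolding next_state_def row_log_def by simp

lemma queued_for_next:
  "queued_for k next_state c = queue_tail c @ (if c mod int k = (s + 1) mod int k then [bumped] else [])"
  unfolding queued_for_def queue_tail_def next_state_def by simp

lemma row_log_pred_next:
  "row_log k next_state (c - 1)
     = row_log k st (c - 1) @ (if c mod int k = (s + 1) mod int k then [bumped] else [])"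
  unfolding row_log_next pred_mod_eq_iff by simp

lemma bumped_ge_row_log: "\<forall>w\<in>set (row_log k st s). w \<le> bumped"
proof -
  obtain pre0 where pre0: "row_log k st (s - 1) = pre0 @ x # queue_tail s" "\<forall>v\<in>set pre0. v \<le> x"
    using inserted_before_head by blast
  have "(\<exists>v\<in>set pre0. bumped \<le> v) \<or> (\<forall>w\<in>set (row_log k st s). w \<le> bumped)"
    using log_bound[of s] pre0(1) queued_for_eq[of s] bump_pos(1) unfolding row_log_bound_def by simp
  then show ?thesis
    using pre0(2) bump_pos(2) by force
qed

lemma entries_periodic_next: "entries_periodic n k next_state"
  using periodic_entries unfolding entries_periodic_def
  by (simp add: set_ent_apply same_box_shift_iff)

lemma sorted_row_log_next: "sorted (row_log k next_state c)"
proof (cases "c mod int k = s mod int k")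
  case True
  moreover have "row_log k st c = row_log k st s"
    by (rule row_log_mod_cong[OF True])
  ultimately show ?thesis
    using sorted_row_log[of c] bumped_ge_row_log unfolding row_log_next
    by (auto simp: sorted_append)
qed (simp add: row_log_next sorted_row_log)

text \<open>Entries at most \<open>x\<close> are dominated by the newly inserted \<open>x\<close>; any other entry lies right of
  the bump position, so it is at least the bumped entry, which dominates the old log.\<close>

lemma row_log_bound_next_at_s: "row_log_bound k next_state s"
  unfolding row_log_bound_def
proof (intro allI impI)
  fix pre z
  assume pre: "row_log k next_state (s - 1) = pre @ queued_for k next_state s"
    and act: "active next_state s z"
  obtain pre0 where pre0: "row_log k st (s - 1) = pre0 @ x # queue_tail s"
    using inserted_before_head by blast
  have pre_eq: "pre = pre0 @ [x]"
    using pre pre0 unfolding row_log_pred_next queued_for_next by simp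
  have act_z: "active st s z"
    using act by simp
  have old: "(\<exists>v\<in>set pre0. ent st (s, z) \<le> v) \<or> (\<forall>w\<in>set (row_log k st s). w \<le> ent st (s, z))"
    using log_bound[of s] pre0 queued_for_eq[of s] act_z unfolding row_log_bound_def by simp
  show "(\<exists>v\<in>set pre. ent next_state (s, z) \<le> v)
      \<or> (\<forall>w\<in>set (row_log k next_state s). w \<le> ent next_state (s, z))"
  proof (cases "z = bump_pos \<or> ent st (s, z) \<le> x")
    case True
    then show ?thesis
      unfolding ent_next_row pre_eq by auto
  next
    case False
    then have "bump_pos \<le> z"
      using bump_pos_le act_z by (simp add: not_le)
    then have "bumped \<le> ent st (s, z)"
    proof (rule int_le_chain[where g = "\<lambda>z. ent st (s, z)", rotated])
      fix w
      assume "bump_pos \<le> w" "w < z"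
      then have "active st s w" "active st s (w + 1)"
        using bump_pos(1) act_z unfolding active_def by auto
      then show "ent st (s, w) \<le> ent st (s, w + 1)"
        using sorted_row[of s] unfolding row_sorted_def by blast
    qed
    then show ?thesis
      using old False unfolding ent_next_row pre_eq row_log_next by auto
  qed
qed

lemma row_sorted_next_at_s: "row_sorted next_state s"
  unfolding row_sorted_def next_state_simps(4)
proof (intro allI impI)
  fix z
  assume act: "active st s z" "active st s (z + 1)"
  have le: "ent st (s, z) \<le> ent st (s, z + 1)"
    using sorted_row[of s] act unfolding row_sorted_def by blast
  moreover have "\<not> x < ent st (s, z)" if "z + 1 = bump_pos"
    using bump_pos_le[of z] act that by auto
  ultimately show "ent next_state (s, z) \<le> ent next_state (s, z + 1)"
    unfolding ent_next_row using bump_pos(2) by auto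
qed

lemma row_invariants_next: "row_log_bound k next_state c \<and> row_sorted next_state c"
proof (cases "c mod int k = s mod int k")
  case True
  then show ?thesis
    using row_invariants_mod_cong[OF _ _ entries_periodic_next
        row_log_bound_next_at_s row_sorted_next_at_s True]
      periodic_outer periodic_inner by simp
next
  case False
  have logs: "row_log k next_state c = row_log k st c"
    using False unfolding row_log_next by simp
  have "row_log k next_state (c - 1) = pre @ queued_for k next_state c
      \<longleftrightarrow> row_log k st (c - 1) = pre @ queued_for k st c" for pre
    unfolding row_log_pred_next queued_for_next queued_for_eq using False by auto
  then show ?thesis
    using log_bound[of c] sorted_row[of c] ent_next_other_row[OF False]
    unfolding row_log_bound_def row_sorted_def logs by simp
qed

lemma invariant_next: "fm_invariant n k next_state"
proof -
  have "\<exists>pre. row_log k next_state (c - 1) = pre @ queued_for k next_state c" for c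
    using row_log_suffix[of c] queued_for_eq[of c]
    unfolding row_log_pred_next queued_for_next by (metis append.assoc)
  moreover have "pending_bounds k next_state"
    by (simp add: pending_bounds_def)
  ultimately show ?thesis
    unfolding fm_invariant_def
    using periodic_outer periodic_inner entries_periodic_next sorted_row_log_next
      row_invariants_next by auto
qed

end

lemma (in fm_invariant_state) invariant_fm_step: "fm_invariant n k (fm_step n k st)"
proof (cases "pend st")
  case (Cons p rest)
  obtain h y where p: "p = (h, y)"
    by fastforce
  show ?thesis
  proof (cases "y \<le> outer st h")
    case True
    then interpret fm_removal_step n k st h y rest
      using Cons p by unfold_locales simp_all
    show ?thesis
      by (simp add: fm_step_eq invariant_next)
  next
    case False
    then interpret fm_skip_step n k st h y rest
      using Cons p by unfold_locales simp_all
    show ?thesis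
      by (simp add: fm_step_eq invariant_next)
  qed
next
  case no_pending: Nil
  show ?thesis
  proof (cases "queue st")
    case Nil
    \<comment> \<open>Starting a new round only moves \<open>nqueue\<close> to \<open>queue\<close>; the invariant sees their concatenation.\<close>
    then show ?thesis
      using invariant no_pending
      by (auto simp: fm_step_def fm_invariant_def entries_periodic_def active_def row_log_def
          queued_for_def row_log_bound_def row_sorted_def pending_bounds_def)
  next
    case (Cons q rest)
    obtain x s where q: "q = (x, s)"
      by fastforce
    show ?thesis
    proof (cases "\<forall>y. active st s y \<longrightarrow> ent st (s, y) \<le> x")
      case True
      then interpret fm_append_step n k st x s rest
        using Cons q no_pending by unfold_locales simp_all
      show ?thesis
        by (simp add: fm_step_eq invariant_next)
    next
      case False
      then interpret fm_bump_step n k st x s rest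
        using Cons q no_pending by unfold_locales simp_all
      show ?thesis
        by (simp add: fm_step_eq invariant_next)
    qed
  qed
qed

section \<open>The initial state\<close>

lemma sorted_wrt_concat_rows:
  "sorted_wrt (<) hs \<Longrightarrow> sorted_wrt (\<lambda>p q. fst p < fst q \<or> fst p = fst q \<and> snd p < snd q)
     (concat (map (\<lambda>h. map (\<lambda>y. (h, y)) (filter (P h) [(a h :: int) .. b h])) hs))"
proof (induction hs)
  case (Cons h hs)
  have "sorted_wrt (\<lambda>p q. fst p < fst q \<or> fst p = fst q \<and> snd p < snd q)
      (map (\<lambda>y. (h, y)) (filter (P h) [a h .. b h]))"
    unfolding sorted_wrt_map
    by (rule sorted_wrt_filter) (simp add: sorted_wrt_mono_rel[OF _ sorted_wrt_upto])
  then show ?case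
    using Cons by (auto simp: sorted_wrt_append)
qed simp

lemma pend_init_mem:
  "(h, y) \<in> set (pend (fm_init n k lam mu T S nu r0))
     \<Longrightarrow> r0 \<le> h \<and> h \<le> r0 + int k - 1 \<and> mu h < y \<and> y \<le> nu h"
  by (auto simp: fm_init_def)

lemma sorted_pending_init: "sorted_wrt (pending_order k) (pend (fm_init n k lam mu T S nu r0))"
proof -
  have "sorted_wrt (\<lambda>p q. fst p < fst q \<or> fst p = fst q \<and> snd p < snd q)
      (pend (fm_init n k lam mu T S nu r0))"
    unfolding fm_init_def fm_state.select_convs by (rule sorted_wrt_concat_rows[OF sorted_wrt_upto])
  then show ?thesis
  proof (rule sorted_wrt_mono_rel[rotated])
    fix p q
    assume mem: "p \<in> set (pend (fm_init n k lam mu T S nu r0))"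
      "q \<in> set (pend (fm_init n k lam mu T S nu r0))"
      and lex: "fst p < fst q \<or> fst p = fst q \<and> snd p < snd q"
    obtain h1 y1 h2 y2 where pq: "p = (h1, y1)" "q = (h2, y2)"
      by fastforce
    show "pending_order k p q"
      using lex mem pend_init_mem mod_neq_if_in_window[of r0 h1 h2 k]
      unfolding pending_order_def pq by fastforce
  qed
qed

lemma init_simps:
  "outer (fm_init n k lam mu T S nu r0) = lam" "inner (fm_init n k lam mu T S nu r0) = nu"
  "ent (fm_init n k lam mu T S nu r0) = T" "queue (fm_init n k lam mu T S nu r0) = []"
  "nqueue (fm_init n k lam mu T S nu r0) = []" "removed (fm_init n k lam mu T S nu r0) = []"
  by (simp_all add: fm_init_def)

lemma pending_bounds_init:
  fixes T :: "int \<times> int \<Rightarrow> 'a::linorder"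
  assumes "cyl_tableau n k lam mu T"
  shows "pending_bounds k (fm_init n k lam mu T S nu r0)"
  unfolding pending_bounds_def init_simps
proof (intro allI impI conjI)
  fix h y y'
  assume mem: "(h, y) \<in> set (pend (fm_init n k lam mu T S nu r0))"
    and y': "y < y' \<and> y' \<le> lam h \<and> (nu h < y' \<or> (h, y') \<in> set (pend (fm_init n k lam mu T S nu r0)))"
  show "T (h, y) \<le> T (h, y')"
  proof (rule int_le_chain[where g = "\<lambda>z. T (h, z)"])
    fix w
    assume "y \<le> w" "w < y'"
    then show "T (h, w) \<le> T (h, w + 1)"
      using assms pend_init_mem[OF mem] y' unfolding cyl_tableau_def in_skew_def in_shape_def by auto
  qed (use y' in simp)
qed (auto simp: row_log_def init_simps dest: pend_init_mem)

lemma fm_invariant_init: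
  fixes T :: "int \<times> int \<Rightarrow> 'a::linorder"
  assumes tab: "cyl_tableau n k lam mu T" and input: "fullmulti_input n k mu S nu"
  shows "fm_invariant n k (fm_init n k lam mu T S nu r0)"
proof -
  let ?st = "fm_init n k lam mu T S nu r0"
  have T_box: "\<And>p q. in_skew lam mu p \<Longrightarrow> same_box n k p q \<Longrightarrow> T q = T p"
    and T_row: "\<And>x y. in_skew lam mu (x, y) \<Longrightarrow> in_skew lam mu (x, y + 1) \<Longrightarrow> T (x, y) \<le> T (x, y + 1)"
    and periodic: "cyl_periodic n k lam" "cyl_periodic n k nu"
    using tab input cylindric_imp_cyl_periodic
    unfolding cyl_tableau_def fullmulti_input_def by blast+
  have "in_shape nu (x, mu x)" for x
    using input unfolding fullmulti_input_def by (simp add: in_shape_def)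
  then have mu_le_nu: "mu x \<le> nu x" for x
    by (simp add: in_shape_def)
  have active_skew: "active ?st x y \<Longrightarrow> in_skew lam mu (x, y)" for x y
    unfolding active_def init_simps in_skew_def in_shape_def using mu_le_nu[of x] by auto
  have "entries_periodic n k ?st"
    unfolding entries_periodic_def
  proof (intro allI impI)
    fix x y t
    assume "active ?st x y"
    moreover have "same_box n k (x, y) (x - t * int k, y + t * (int n - int k))"
      unfolding same_box_def by auto
    ultimately show "ent ?st (x - t * int k, y + t * (int n - int k)) = ent ?st (x, y)"
      using T_box active_skew unfolding init_simps by blast
  qed
  moreover have "row_sorted ?st c" for c
    unfolding row_sorted_def init_simps using active_skew T_row by blast
  ultimately show ?thesis
    unfolding fm_invariant_def row_log_bound_def
    using periodic pending_bounds_init[OF tab] sorted_pending_init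
    by (auto simp: init_simps row_log_def queued_for_def)
qed

theorem mainTheorem13:
  fixes n k :: nat and lam mu nu :: "int \<Rightarrow> int" and T :: "int \<times> int \<Rightarrow> 'a::linorder"
    and S :: "(int \<times> int) set" and r0 :: int
  assumes "1 \<le> k" and "k < n"
    and "cyl_tableau n k lam mu T"
    and "fullmulti_input n k mu S nu"
  shows "\<forall>m r. sorted (map snd (filter (\<lambda>e. fst e mod int k = r mod int k)
            (removed ((fm_step n k ^^ m) (fm_init n k lam mu T S nu r0)))))"
proof (intro allI)
  fix m r
  have "fm_invariant n k ((fm_step n k ^^ m) (fm_init n k lam mu T S nu r0))"
  proof (induction m)
    case 0
    then show ?case
      using fm_invariant_init[OF assms(3,4)] by simp
  next
    case (Suc m)
    interpret fm_invariant_state n k "(fm_step n k ^^ m) (fm_init n k lam mu T S nu r0)"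
      using Suc assms(1) by unfold_locales simp_all
    show ?case
      using invariant_fm_step by simp
  qed
  then show "sorted (map snd (filter (\<lambda>e. fst e mod int k = r mod int k)
      (removed ((fm_step n k ^^ m) (fm_init n k lam mu T S nu r0)))))"
    unfolding fm_invariant_def row_log_def by blast
qed

end
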